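(* Let $q\ge1$ and $t$ be integers with $0\le t<q$, and let $\mathcal{C}_{q,t}^{\mathrm{det}}=\bigcup_{i=0}^{\lfloor (q-1)/(t+1)\rfloor}\mathcal{S}_{q-i(t+1)}^q.$ Then $\mathcal{C}_{q,t}^{\mathrm{det}}$ is a $t$-tail-deletion-detecting code, and it is optimal, i.e. $\mathsf{DEL}_{\mathrm{det}}(q,t)=|\mathcal{C}_{q,t}^{\mathrm{det}}|=\sum_{i=0}^{\lfloor (q-1)/(t+1)\rfloor}|\mathcal{S}_{q-i(t+1)}^q|=q!\sum_{i=0}^{\lfloor (q-1)/(t+1)\rfloor}\frac{1}{(i(t+1))!}.$
   Context: Let $[q]=\{0,1,\dots,q-1\}$. For $1\le m\le q$, a partial permutation of length $m$ over $[q]$ is a sequence $\pi=(\pi_1,\dots,\pi_m)$ of $m$ pairwise distinct elements of $[q]$. Let $\mathcal{S}_m^q$ be the set of those of length $m$ and $\mathcal{S}_{\mathrm{all}}^q=\bigcup_{m=1}^{q}\mathcal{S}_m^q$. A code is any subset of $\mathcal{S}_{\mathrm{all}}^q$. For $\pi$ of length $m$ and integer $j\ge 0$, $\pi_{\downarrow j}=(\pi_{k+1},\dots,\pi_m)$ with $k=\min(j,m-1)$ (leftmost symbols are deleted; the last symbol is never deleted); $\mathcal{B}_{\mathrm{del}}^t(\pi)=\{\pi_{\downarrow j}:0\le j\le t\}$. A code $\mathcal{C}$ is $t$-tail-deletion-detecting if $\mathcal{C}\cap\mathcal{B}_{\mathrm{del}}^t(\pi)=\{\pi\}$ for every $\pi\in\mathcal{C}$.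 $\mathsf{DEL}_{\mathrm{det}}(q,t)$ denotes the maximum size of a $t$-tail-deletion-detecting code in $\mathcal{S}_{\mathrm{all}}^q$. *)

theory Defs
  imports Complex_Main
begin

text \<open>Partial permutations over [q] = {0..<q} are represented as lists of
pairwise distinct naturals below q.\<close>

definition S :: "nat \<Rightarrow> nat \<Rightarrow> nat list set" where
  "S q m = {\<pi>. length \<pi> = m \<and> distinct \<pi> \<and> set \<pi> \<subseteq> {0..<q}}"

definition S_all :: "nat \<Rightarrow> nat list set" where
  "S_all q = (\<Union>m\<in>{1..q}. S q m)"

definition tail_del :: "nat list \<Rightarrow> nat \<Rightarrow> nat list" where
  "tail_del \<pi> j = drop (min j (length \<pi> - 1)) \<pi>"

definition B_del :: "nat \<Rightarrow> nat list \<Rightarrow> nat list set" where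
  "B_del t \<pi> = {tail_del \<pi> j | j. j \<le> t}"

definition is_code :: "nat \<Rightarrow> nat list set \<Rightarrow> bool" where
  "is_code q C \<longleftrightarrow> C \<subseteq> S_all q"

definition tail_del_detecting :: "nat \<Rightarrow> nat list set \<Rightarrow> bool" where
  "tail_del_detecting t C \<longleftrightarrow> (\<forall>\<pi>\<in>C. C \<inter> B_del t \<pi> = {\<pi>})"

definition DEL_det :: "nat \<Rightarrow> nat \<Rightarrow> nat" where
  "DEL_det q t = Max {card C | C. is_code q C \<and> tail_del_detecting t C}"

definition C_det :: "nat \<Rightarrow> nat \<Rightarrow> nat list set" where
  "C_det q t = (\<Union>i\<in>{0..(q - 1) div (t + 1)}. S q (q - i * (t + 1)))"

end

theory Submission
  imports Defs
begin

text \<open>Two words of C_det have lengths congruent to q modulo t + 1, so one can never arise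
from the other by deleting between 1 and t leading symbols. For optimality, prepend to a word
\<pi> the (q - |\<pi>|) mod (t + 1) smallest unused symbols; this lands in C_det, and if two words of a
detecting code had the same image, the shorter one would be a tail deletion of the longer
one by fewer than t + 1 symbols.\<close>

lemma mem_S_all_iff:
  "\<pi> \<in> S_all q \<longleftrightarrow> \<pi> \<in> S q (length \<pi>) \<and> 1 \<le> length \<pi> \<and> length \<pi> \<le> q"
  unfolding S_all_def S_def by auto

lemma finite_S: "finite (S q m)"
proof -
  have "S q m \<subseteq> {xs. set xs \<subseteq> {0..<q} \<and> length xs = m}"
    unfolding S_def by auto
  then show ?thesis
    using finite_lists_length_eq[of "{0..<q}" m] finite_subset by blast
qed

lemma finite_C_det: "finite (C_det q t)"
  unfolding C_det_def using finite_S by auto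

lemma real_card_S:
  assumes "m \<le> q"
  shows "real (card (S q m)) = fact q / fact (q - m)"
proof -
  have "card (S q m) = \<Prod>{q - m + 1..q}"
    using card_lists_distinct_length_eq[of "{0..<q}" m] assms unfolding S_def by simp
  also have "\<dots> = fact q div fact (q - m)"
    by (simp add: fact_div_fact)
  finally show ?thesis
    by (simp add: real_of_nat_div fact_dvd)
qed

lemma mult_le_diff_one_if_le_div:
  fixes q t i :: nat
  assumes "i \<le> (q - 1) div (t + 1)"
  shows "i * (t + 1) \<le> q - 1"
  using assms by (simp add: less_eq_div_iff_mult_less_eq)

lemma mem_C_det_iff:
  assumes "1 \<le> q"
  shows "\<pi> \<in> C_det q t \<longleftrightarrow> \<pi> \<in> S_all q \<and> (t + 1) dvd (q - length \<pi>)"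
proof
  assume "\<pi> \<in> C_det q t"
  then obtain i where i: "i \<le> (q - 1) div (t + 1)" and \<pi>: "\<pi> \<in> S q (q - i * (t + 1))"
    unfolding C_det_def by auto
  have le: "i * (t + 1) \<le> q - 1"
    using i by (rule mult_le_diff_one_if_le_div)
  have len: "length \<pi> = q - i * (t + 1)"
    using \<pi> unfolding S_def by simp
  have "\<pi> \<in> S_all q"
    using \<pi> le assms unfolding mem_S_all_iff len by simp
  moreover have "q - length \<pi> = (t + 1) * i"
    using le len by simp
  ultimately show "\<pi> \<in> S_all q \<and> (t + 1) dvd (q - length \<pi>)"
    by (metis dvd_triv_left)
next
  assume \<pi>: "\<pi> \<in> S_all q \<and> (t + 1) dvd (q - length \<pi>)"
  then obtain i where i: "q - length \<pi> = i * (t + 1)"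
    by (metis dvdE mult.commute)
  have "1 \<le> length \<pi>" "length \<pi> \<le> q"
    using \<pi> mem_S_all_iff by auto
  with i have "i \<le> (q - 1) div (t + 1)" and "length \<pi> = q - i * (t + 1)"
    by (simp_all add: less_eq_div_iff_mult_less_eq)
  then show "\<pi> \<in> C_det q t"
    using \<pi> unfolding C_det_def mem_S_all_iff by auto
qed

lemma card_C_det:
  "card (C_det q t) = (\<Sum>i = 0..(q - 1) div (t + 1). card (S q (q - i * (t + 1))))"
  unfolding C_det_def
proof (rule card_UN_disjoint)
  show "\<forall>i\<in>{0..(q - 1) div (t + 1)}. \<forall>j\<in>{0..(q - 1) div (t + 1)}. i \<noteq> j \<longrightarrow>
      S q (q - i * (t + 1)) \<inter> S q (q - j * (t + 1)) = {}"
  proof (intro ballI impI)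
    fix i j
    assume "i \<in> {0..(q - 1) div (t + 1)}" "j \<in> {0..(q - 1) div (t + 1)}" "i \<noteq> j"
    then have "i * (t + 1) \<noteq> j * (t + 1)"
      by (simp only: mult_cancel2) simp
    moreover have "i * (t + 1) \<le> q - 1" "j * (t + 1) \<le> q - 1"
      using \<open>i \<in> _\<close> \<open>j \<in> _\<close> mult_le_diff_one_if_le_div by auto
    ultimately have "q - i * (t + 1) \<noteq> q - j * (t + 1)"
      by linarith
    then show "S q (q - i * (t + 1)) \<inter> S q (q - j * (t + 1)) = {}"
      unfolding S_def by auto
  qed
qed (simp_all add: finite_S)

lemma real_card_C_det:
  "real (card (C_det q t)) = fact q * (\<Sum>i = 0..(q - 1) div (t + 1). 1 / fact (i * (t + 1)))"
proof -
  have "real (card (S q (q - i * (t + 1)))) = fact q * (1 / fact (i * (t + 1)))"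
    if "i \<in> {0..(q - 1) div (t + 1)}" for i
  proof -
    have "i * (t + 1) \<le> q"
      using that mult_le_diff_one_if_le_div[of i q t] by simp
    then show ?thesis
      using real_card_S[of "q - i * (t + 1)" q] by simp
  qed
  then show ?thesis
    unfolding card_C_det of_nat_sum sum_distrib_left by (rule sum.cong[OF refl])
qed

lemma drop_mem_B_del:
  assumes "k \<le> t" and "k < length \<pi>"
  shows "drop k \<pi> \<in> B_del t \<pi>"
proof -
  have "drop k \<pi> = tail_del \<pi> k"
    using assms(2) unfolding tail_del_def by simp
  then show ?thesis
    using assms(1) unfolding B_del_def by blast
qed

lemma tail_del_detecting_if_length_gap:
  assumes gap: "\<And>\<pi> \<pi>'. \<pi> \<in> C \<Longrightarrow> \<pi>' \<in> C \<Longrightarrow> length \<pi>' < length \<pi> \<Longrightarrow> length \<pi>' + t < length \<pi>"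
  shows "tail_del_detecting t C"
  unfolding tail_del_detecting_def
proof (intro ballI equalityI subsetI)
  fix \<pi> x
  assume \<pi>: "\<pi> \<in> C" and x: "x \<in> C \<inter> B_del t \<pi>"
  then obtain j where "j \<le> t" "x = tail_del \<pi> j"
    unfolding B_del_def by auto
  moreover define k where "k = min j (length \<pi> - 1)"
  ultimately have k: "k \<le> t" "x = drop k \<pi>" "k = 0 \<or> k < length \<pi>"
    unfolding tail_del_def by auto
  show "x \<in> {\<pi>}"
  proof (rule ccontr)
    assume "x \<notin> {\<pi>}"
    with k(2) have "k \<noteq> 0"
      by (metis drop_0 singletonI)
    with k(3) have "0 < k" "k < length \<pi>"
      by auto
    with k have "length x < length \<pi>"
      by simp
    with \<pi> x have "length x + t < length \<pi>"
      using gap by blast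
    with k show False
      by simp
  qed
next
  fix \<pi> x
  assume "\<pi> \<in> C" "x \<in> {\<pi>}"
  moreover have "\<pi> \<in> B_del t \<pi>"
    unfolding B_del_def tail_del_def by force
  ultimately show "x \<in> C \<inter> B_del t \<pi>"
    by simp
qed

lemma length_gap_C_det:
  assumes "1 \<le> q" and "\<pi> \<in> C_det q t" "\<pi>' \<in> C_det q t" and "length \<pi>' < length \<pi>"
  shows "length \<pi>' + t < length \<pi>"
proof -
  have "length \<pi> \<le> q"
    using assms(1,2) mem_C_det_iff mem_S_all_iff by blast
  moreover have "(t + 1) dvd (q - length \<pi>')" "(t + 1) dvd (q - length \<pi>)"
    using assms(1-3) mem_C_det_iff by blast+
  ultimately have "(t + 1) dvd (length \<pi> - length \<pi>')"
    using dvd_diff_nat[of "t + 1" "q - length \<pi>'" "q - length \<pi>"] assms(4) by simp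
  then have "t + 1 \<le> length \<pi> - length \<pi>'"
    using assms(4) by (simp add: dvd_imp_le)
  then show ?thesis
    by simp
qed

lemma tail_del_detecting_C_det:
  assumes "1 \<le> q"
  shows "tail_del_detecting t (C_det q t)"
  using length_gap_C_det[OF assms] by (rule tail_del_detecting_if_length_gap)

lemma is_code_C_det:
  assumes "1 \<le> q"
  shows "is_code q (C_det q t)"
  unfolding is_code_def using mem_C_det_iff[OF assms] by blast

definition pad :: "nat \<Rightarrow> nat \<Rightarrow> nat list \<Rightarrow> nat list" where
  "pad q n \<pi> = take n (filter (\<lambda>x. x \<notin> set \<pi>) [0..<q]) @ \<pi>"

lemma
  assumes "\<pi> \<in> S q m" and "n \<le> q - m"
  shows pad_mem_S: "pad q n \<pi> \<in> S q (m + n)"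
    and drop_pad: "drop n (pad q n \<pi>) = \<pi>"
proof -
  define r where "r = filter (\<lambda>x. x \<notin> set \<pi>) [0..<q]"
  have \<pi>: "length \<pi> = m" "distinct \<pi>" "set \<pi> \<subseteq> {0..<q}"
    using assms(1) unfolding S_def by auto
  have r: "distinct r" "set r = {0..<q} - set \<pi>"
    unfolding r_def by auto
  have "length r = card ({0..<q} - set \<pi>)"
    using distinct_card[OF r(1)] r(2) by simp
  also have "\<dots> = q - m"
    using \<pi> by (simp add: card_Diff_subset distinct_card)
  finally have "length r = q - m" .
  then have "length (take n r) = n"
    using assms(2) by simp
  moreover have "pad q n \<pi> = take n r @ \<pi>"
    unfolding pad_def r_def ..
  moreover have "distinct (take n r @ \<pi>)" "set (take n r @ \<pi>) \<subseteq> {0..<q}"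
    using r \<pi> by (auto dest: in_set_takeD)
  ultimately show "pad q n \<pi> \<in> S q (m + n)" "drop n (pad q n \<pi>) = \<pi>"
    unfolding S_def using \<pi>(1) by auto
qed

definition pad_to_C_det :: "nat \<Rightarrow> nat \<Rightarrow> nat list \<Rightarrow> nat list" where
  "pad_to_C_det q t \<pi> = pad q ((q - length \<pi>) mod (t + 1)) \<pi>"

lemma pad_to_C_det_mem_S:
  assumes "\<pi> \<in> S_all q"
  shows "pad_to_C_det q t \<pi> \<in> S q (length \<pi> + (q - length \<pi>) mod (t + 1))"
  using assms unfolding pad_to_C_det_def mem_S_all_iff by (auto intro: pad_mem_S)

lemma drop_pad_to_C_det:
  assumes "\<pi> \<in> S_all q"
  shows "drop ((q - length \<pi>) mod (t + 1)) (pad_to_C_det q t \<pi>) = \<pi>"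
  using assms unfolding pad_to_C_det_def mem_S_all_iff by (auto intro: drop_pad)

lemma pad_to_C_det_mem_C_det:
  assumes "1 \<le> q" and \<pi>: "\<pi> \<in> S_all q"
  shows "pad_to_C_det q t \<pi> \<in> C_det q t"
proof -
  let ?d = "(q - length \<pi>) mod (t + 1)"
  have mem: "pad_to_C_det q t \<pi> \<in> S q (length \<pi> + ?d)"
    using \<pi> by (rule pad_to_C_det_mem_S)
  then have len: "length (pad_to_C_det q t \<pi>) = length \<pi> + ?d"
    unfolding S_def by simp
  have "q - (length \<pi> + ?d) = (t + 1) * ((q - length \<pi>) div (t + 1))"
    using minus_mod_eq_mult_div[of "q - length \<pi>" "t + 1"] by simp
  then have "(t + 1) dvd (q - length (pad_to_C_det q t \<pi>))"
    unfolding len by (simp only: dvd_triv_left)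
  moreover have "length \<pi> + ?d \<le> q"
  proof -
    have "?d \<le> q - length \<pi>" "length \<pi> \<le> q"
      using \<pi> unfolding mem_S_all_iff by (simp_all only: mod_less_eq_dividend)
    then show ?thesis
      by linarith
  qed
  ultimately show ?thesis
    using mem \<pi> unfolding mem_C_det_iff[OF assms(1)] mem_S_all_iff len by auto
qed

lemma pad_to_C_det_eq_imp_mem_B_del:
  assumes \<pi>: "\<pi> \<in> S_all q" and \<pi>': "\<pi>' \<in> S_all q"
    and eq: "pad_to_C_det q t \<pi> = pad_to_C_det q t \<pi>'" and le: "length \<pi> \<le> length \<pi>'"
  shows "\<pi> \<in> B_del t \<pi>'"
proof -
  define d where "d = (q - length \<pi>) mod (t + 1)"
  define d' where "d' = (q - length \<pi>') mod (t + 1)"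
  have "length \<pi> + d = length \<pi>' + d'"
    using pad_to_C_det_mem_S[OF \<pi>, of t] pad_to_C_det_mem_S[OF \<pi>', of t] eq
    unfolding S_def d_def d'_def by simp
  then have shift: "d = d' + (d - d')" and "d - d' = length \<pi>' - length \<pi>"
    using le by simp_all
  have "\<pi> = drop d (pad_to_C_det q t \<pi>')"
    using drop_pad_to_C_det[OF \<pi>, of t] eq unfolding d_def by simp
  also have "\<dots> = drop (d - d') (drop d' (pad_to_C_det q t \<pi>'))"
    by (subst shift) (simp add: add.commute)
  also have "\<dots> = drop (d - d') \<pi>'"
    using drop_pad_to_C_det[OF \<pi>', of t] unfolding d'_def by simp
  finally have \<pi>_eq: "\<pi> = drop (d - d') \<pi>'" .
  have "d < t + 1"
    unfolding d_def by simp
  then have "d - d' \<le> t"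
    by simp
  moreover have "1 \<le> length \<pi>"
    using \<pi> unfolding mem_S_all_iff by simp
  then have "d - d' < length \<pi>'"
    using \<open>d - d' = _\<close> le by linarith
  ultimately have "drop (d - d') \<pi>' \<in> B_del t \<pi>'"
    by (rule drop_mem_B_del)
  then show ?thesis
    unfolding \<pi>_eq .
qed

lemma inj_on_pad_to_C_det:
  assumes code: "is_code q C" and detecting: "tail_del_detecting t C"
  shows "inj_on (pad_to_C_det q t) C"
proof -
  have eq: "\<pi> = \<pi>'"
    if "\<pi> \<in> C" "\<pi>' \<in> C" "pad_to_C_det q t \<pi> = pad_to_C_det q t \<pi>'" "length \<pi> \<le> length \<pi>'"
    for \<pi> \<pi>'
  proof -
    have "\<pi> \<in> C \<inter> B_del t \<pi>'"
      using that code pad_to_C_det_eq_imp_mem_B_del unfolding is_code_def by blast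
    then show ?thesis
      using detecting that(2) unfolding tail_del_detecting_def by blast
  qed
  show ?thesis
  proof (rule inj_onI)
    fix \<pi> \<pi>'
    assume "\<pi> \<in> C" "\<pi>' \<in> C" "pad_to_C_det q t \<pi> = pad_to_C_det q t \<pi>'"
    then show "\<pi> = \<pi>'"
      using eq[of \<pi> \<pi>'] eq[of \<pi>' \<pi>] by (cases "length \<pi> \<le> length \<pi>'") auto
  qed
qed

lemma card_le_card_C_det:
  assumes "1 \<le> q" and "is_code q C" and "tail_del_detecting t C"
  shows "card C \<le> card (C_det q t)"
proof (rule card_inj_on_le)
  show "inj_on (pad_to_C_det q t) C"
    using assms(2,3) by (rule inj_on_pad_to_C_det)
  show "pad_to_C_det q t ` C \<subseteq> C_det q t"
    using assms(1,2) pad_to_C_det_mem_C_det unfolding is_code_def by blast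
qed (rule finite_C_det)

lemma DEL_det_eq_card_C_det:
  assumes "1 \<le> q"
  shows "DEL_det q t = card (C_det q t)"
proof -
  let ?K = "{card C | C. is_code q C \<and> tail_del_detecting t C}"
  have "card (C_det q t) \<in> ?K"
    using is_code_C_det[OF assms] tail_del_detecting_C_det[OF assms] by blast
  moreover have bound: "\<forall>k \<in> ?K. k \<le> card (C_det q t)"
    using card_le_card_C_det[OF assms] by blast
  moreover have "finite ?K"
    using bound finite_nat_set_iff_bounded_le by blast
  ultimately show ?thesis
    unfolding DEL_det_def by (intro Max_eqI) auto
qed

theorem mainTheorem8:
  fixes q t :: nat
  assumes "q \<ge> 1" and "t < q"
  shows "is_code q (C_det q t) \<and> tail_del_detecting t (C_det q t)
    \<and> DEL_det q t = card (C_det q t)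
    \<and> card (C_det q t) = (\<Sum>i = 0..(q - 1) div (t + 1). card (S q (q - i * (t + 1))))
    \<and> real (card (C_det q t)) = fact q * (\<Sum>i = 0..(q - 1) div (t + 1). 1 / fact (i * (t + 1)))"
  using is_code_C_det[OF assms(1)] tail_del_detecting_C_det[OF assms(1)]
    DEL_det_eq_card_C_det[OF assms(1)] card_C_det real_card_C_det
  by blast

end
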